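(* Under the standing assumptions in the context, the coefficients $a_g$ satisfy $a_2=\tfrac{5}{24}$ and, for every $g\ge 3$, $$(3g-3)\,a_g=\frac12\left(\sum_{h=2}^{g-2}(3h-3)(3g-3h-3)\,a_h\,a_{g-h}+(3g-6)(3g-3)\,a_{g-1}\right).$$
   Context: Setting: the polynomial formulation of the BCOV holomorphic anomaly equations on a one-dimensional slice (local coordinate $z$) of the moduli space of a Calabi–Yau threefold. $C_{zzz}$ is the holomorphic Yukawa coupling, assumed nonzero. The genus-$g$ free energies $\mathcal F^{(g)}$ ($g\ge 1$) are polynomials in the generators $S^{zz},S^z,S,K_z$ with coefficients holomorphic (rational) in $z$. For $g\ge2$, $\mathcal F^{(g)}$ has degree $3g-3$ when $S^{zz},S^z,S,K_z$ are given weights $1,2,3,1$, and its term of highest degree in $S^{zz}$ is $a_g\,C_{zzz}^{2g-2}(S^{zz})^{3g-3}$ with $a_g\in\mathbb Q$. "Lower order terms" (l.o.t.) below means terms of lower degree in $S^{zz}$ relative to the displayed top term of the same weight. The covariant derivative $D_z$ acts as a derivation (Leibniz rule) and satisfies, at top order, $D_zS^{zz}=2S^z-C_{zzz}(S^{zz})^2+h^{zz}_z$ (with $h^{zz}_z$ holomorphic), so $D_zS^{zz}=-C_{zzz}(S^{zz})^2+\text{l.o.t.}$, and $D_zC_{zzz}=\partial_zC_{zzz}-3s^z_{zz}C_{zzz}-4K_zC_{zzz}+3C_{zzz}^2S^{zz}$ (with $s^z_{zz}$ holomorphic), so $D_zC_{zzz}=3C_{zzz}^2S^{zz}+\text{l.o.t.}$.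 The genus-one free energy satisfies $D_z\mathcal F^{(1)}=\tfrac12C_{zzz}S^{zz}+\text{l.o.t.}$. For $g\ge2$ the holomorphic anomaly equation in polynomial form reads $$\frac{\partial\mathcal F^{(g)}}{\partial S^{zz}}=\frac12\sum_{h=1}^{g-1}D_z\mathcal F^{(h)}\,D_z\mathcal F^{(g-h)}+\frac12 D_zD_z\mathcal F^{(g-1)},$$ together with $0=\partial_{K_z}\mathcal F^{(g)}+S^z\partial_S\mathcal F^{(g)}+S^{zz}\partial_{S^z}\mathcal F^{(g)}$. *)

theory Defs
  imports "HOL-Computational_Algebra.Polynomial"
begin

end

theory Submission
  imports Defs
begin

text \<open>Write X = [:0, 1:] for S^{zz}. On top coefficients the derivation D acts by
  C^k X^n \<mapsto> (3k - n) C^(k+1) X^(n+1): each X contributes -C X^2 and each C contributes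
  3 C^2 X. Hence D F^(h) has top term top_DF h C^(2h-1) X^(3h-2), and every term of the
  anomaly equation for F^(g) has a rational multiple of C^(2g-2) as its coefficient of X^(3g-4). Comparing these coefficients
  and cancelling C^(2g-2) \<noteq> 0 gives a quadratic recursion for top_DF; splitting off the
  boundary terms h = 1 and h = g - 1 of the sum yields the stated recursion, and g = 2 gives
  a_2 = 5/24.\<close>

lemma coeff_mult_at_degree_bounds:
  fixes p q :: "'a::comm_semiring_0 poly"
  assumes "degree p \<le> m" "degree q \<le> n"
  shows "coeff (p * q) (m + n) = coeff p m * coeff q n"
proof (cases "degree p = m \<and> degree q = n")
  case True
  then show ?thesis using coeff_mult_degree_sum[of p q] by simp
next
  case False
  then have "degree p < m \<or> degree q < n" using assms by auto
  moreover from this have "degree (p * q) < m + n"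
    using degree_mult_le[of p q] assms by linarith
  ultimately show ?thesis by (auto simp: coeff_eq_0)
qed

lemma coeff_eq_if_degree_diff_less:
  fixes p q :: "'a::ab_group_add poly"
  shows "degree (p - q) < n \<Longrightarrow> coeff p n = coeff q n"
  using coeff_eq_0[of "p - q" n] by simp

lemma degree_le_if_degree_diff_less:
  fixes p q :: "'a::ab_group_add poly"
  assumes "degree (p - q) < n" "degree q \<le> n"
  shows "degree p \<le> n"
  using degree_add_le[of "p - q" n q] assms by simp

text \<open>D_S and D_C are the top-order parts of D S^{zz} and D C_{zzz}; D_coeff says that
  D of a coefficient is at most linear in S^{zz}.\<close>

locale anomaly_derivation =
  fixes D :: "'a::field_char_0 poly \<Rightarrow> 'a poly"
    and C :: 'a
  assumes D_add: "\<And>p q. D (p + q) = D p + D q"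
    and D_leibniz: "\<And>p q. D (p * q) = D p * q + p * D q"
    and D_coeff: "\<And>c. degree (D [:c:]) \<le> 1"
    and D_S: "degree (D [:0, 1:] - [:0, 0, - C:]) < 2"
    and D_C: "degree (D [:C:] - [:0, 3 * C ^ 2:]) < 1"
begin

lemma D_zero [simp]: "D 0 = 0"
  using D_add[of 0 0] by simp

lemma D_one [simp]: "D 1 = 0"
  using D_leibniz[of 1 1] by simp

lemma D_minus: "D (- p) = - D p"
  using D_add[of p "- p"] by (simp add: add_eq_0_iff2)

lemma D_diff: "D (p - q) = D p - D q"
  using D_add[of p "- q"] D_minus[of q] by simp

lemma D_const_of_nat [simp]: "D [:of_nat n:] = 0"
proof (induction n)
  case (Suc n)
  have "D [:of_nat (Suc n):] = D (1 + [:of_nat n:])"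
    by (simp add: one_pCons)
  also have "\<dots> = 0"
    using Suc.IH by (simp only: D_add D_one add_0)
  finally show ?case .
qed simp

lemma D_const_of_int [simp]: "D [:of_int n:] = 0"
proof -
  obtain m k where "n = int m - int k"
    by (metis int_diff_cases)
  then have "[:of_int n:] = [:of_nat m:] - [:(of_nat k :: 'a):]"
    by simp
  then show ?thesis
    by (simp only: D_diff D_const_of_nat diff_self)
qed

lemma D_const_of_rat [simp]: "D [:of_rat r:] = 0"
proof -
  obtain n m where r: "r = Fract n m" "m \<noteq> 0"
    by (cases r) auto
  then have "[:of_int m:] * [:of_rat r:] = [:(of_int n :: 'a):]"
    by (simp add: of_rat_rat)
  then have "D ([:of_int m:] * [:of_rat r:]) = 0"
    by (simp only: D_const_of_int)
  then have "[:of_int m:] * D [:of_rat r:] = 0"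
    by (simp only: D_leibniz D_const_of_int mult_zero_left add_0)
  with r show ?thesis
    by simp
qed

lemma degree_D_S: "degree (D [:0, 1:]) \<le> 2"
  using degree_le_if_degree_diff_less[OF D_S] by simp

lemma coeff_D_S: "coeff (D [:0, 1:]) 2 = - C"
  using coeff_eq_if_degree_diff_less[OF D_S] by (simp add: numeral_2_eq_2)

lemma degree_D_le: "degree p \<le> n \<Longrightarrow> degree (D p) \<le> n + 1"
proof (induction n arbitrary: p)
  case 0
  then obtain c where "p = [:c:]"
    by (metis degree_0_id le_zero_eq)
  then show ?case
    using D_coeff[of c] by simp
next
  case (Suc n)
  obtain c q where p: "p = pCons c q"
    by (cases p)
  have q: "degree q \<le> n"
    using Suc.prems unfolding p by (cases "q = 0") simp_all
  have p_eq: "p = [:c:] + [:0, 1:] * q"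
    using p by simp
  have "degree (D [:c:]) \<le> Suc n + 1"
    using D_coeff[of c] by simp
  moreover have "degree (D [:0, 1:] * q) \<le> Suc n + 1"
    using degree_mult_le[of "D [:0, 1:]" q] degree_D_S q by linarith
  moreover have "degree ([:0, 1:] * D q) \<le> Suc n + 1"
    using degree_mult_le[of "[:0, 1:]" "D q"] Suc.IH[OF q] by simp
  ultimately have "degree (D [:c:] + (D [:0, 1:] * q + [:0, 1:] * D q)) \<le> Suc n + 1"
    by (intro degree_add_le)
  then show ?case
    unfolding p_eq D_add D_leibniz .
qed

lemma coeff_D_top:
  "degree p \<le> n \<Longrightarrow> coeff (D p) (n + 1) = coeff (D [:coeff p n:]) 1 - of_nat n * C * coeff p n"
proof (induction n arbitrary: p)
  case 0
  then obtain c where "p = [:c:]"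
    by (metis degree_0_id le_zero_eq)
  then show ?case
    by simp
next
  case (Suc n)
  obtain c q where p: "p = pCons c q"
    by (cases p)
  have q: "degree q \<le> n"
    using Suc.prems unfolding p by (cases "q = 0") simp_all
  have p_eq: "p = [:c:] + [:0, 1:] * q"
    using p by simp
  have "coeff (D p) (Suc n + 1)
      = coeff (D [:c:]) (Suc n + 1) + coeff (D [:0, 1:] * q) (2 + n) + coeff (D q) (n + 1)"
    unfolding p_eq D_add D_leibniz coeff_add by simp
  also have "\<dots> = 0 + - C * coeff q n + (coeff (D [:coeff q n:]) 1 - of_nat n * C * coeff q n)"
    using D_coeff[of c] coeff_mult_at_degree_bounds[OF degree_D_S q] coeff_D_S Suc.IH[OF q]
    by (simp add: coeff_eq_0)
  also have "\<dots> = coeff (D [:coeff p (Suc n):]) 1 - of_nat (Suc n) * C * coeff p (Suc n)"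
    by (simp add: p algebra_simps)
  finally show ?case .
qed

lemma coeff_D_const_C_power: "coeff (D [:C ^ k:]) 1 = of_nat (3 * k) * C ^ (k + 1)"
proof (induction k)
  case 0
  then show ?case by (simp flip: one_pCons)
next
  case (Suc k)
  have "[:C ^ Suc k:] = [:C:] * [:C ^ k:]"
    by simp
  then have "D [:C ^ Suc k:] = D [:C:] * [:C ^ k:] + [:C:] * D [:C ^ k:]"
    by (simp only: D_leibniz)
  moreover have "coeff (D [:C:]) 1 = 3 * C ^ 2"
    using coeff_eq_if_degree_diff_less[OF D_C] by simp
  ultimately show ?case
    using Suc.IH by (simp add: power2_eq_square algebra_simps)
qed

lemma coeff_D_weighted_top:
  assumes "degree p \<le> n" "coeff p n = of_rat r * C ^ k"
  shows "coeff (D p) (n + 1) = of_rat r * (of_nat (3 * k) - of_nat n) * C ^ (k + 1)"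
proof -
  have "[:coeff p n:] = [:of_rat r:] * [:C ^ k:]"
    using assms(2) by simp
  then have "D [:coeff p n:] = [:of_rat r:] * D [:C ^ k:]"
    using D_leibniz[of "[:of_rat r:]" "[:C ^ k:]"] by simp
  then have "coeff (D [:coeff p n:]) 1 = of_rat r * coeff (D [:C ^ k:]) 1"
    by simp
  also have "\<dots> = of_rat r * (of_nat (3 * k) * C ^ (k + 1))"
    by (simp only: coeff_D_const_C_power)
  finally show ?thesis
    using coeff_D_top[OF assms(1)] assms(2) by (simp add: algebra_simps)
qed

end

locale polynomial_anomaly = anomaly_derivation D C
  for D :: "'a::field_char_0 poly \<Rightarrow> 'a poly" and C :: 'a +
  fixes F :: "nat \<Rightarrow> 'a poly"
    and a :: "nat \<Rightarrow> rat"
  assumes C_nz: "C \<noteq> 0"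
    and D_F1: "degree (D (F 1) - [:0, C / 2:]) < 1"
    and F_top: "\<And>g. g \<ge> 2 \<Longrightarrow>
        degree (F g - monom (of_rat (a g) * C ^ (2 * g - 2)) (3 * g - 3)) < 3 * g - 3"
    and HAE: "\<And>g. g \<ge> 2 \<Longrightarrow>
        pderiv (F g) = smult (1 / 2) (\<Sum>h = 1..g - 1. D (F h) * D (F (g - h)))
                       + smult (1 / 2) (D (D (F (g - 1))))"
begin

text \<open>The coefficient of C^(2h-1) X^(3h-2) in D F^(h).\<close>

definition top_DF :: "nat \<Rightarrow> rat" where
  "top_DF h = (if h = 1 then 1 / 2 else of_nat (3 * h - 3) * a h)"

lemma degree_F: "g \<ge> 2 \<Longrightarrow> degree (F g) \<le> 3 * g - 3"
  using degree_le_if_degree_diff_less[OF F_top] by (simp add: degree_monom_le)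

lemma coeff_F: "g \<ge> 2 \<Longrightarrow> coeff (F g) (3 * g - 3) = of_rat (a g) * C ^ (2 * g - 2)"
  using coeff_eq_if_degree_diff_less[OF F_top] by simp

lemma degree_D_F: "h \<ge> 1 \<Longrightarrow> degree (D (F h)) \<le> 3 * h - 2"
proof (cases "h = 1")
  case True
  then show ?thesis
    using degree_le_if_degree_diff_less[of "D (F 1)" "[:0, C / 2:]" 1] D_F1 by simp
next
  case False
  moreover assume "h \<ge> 1"
  ultimately show ?thesis
    using degree_D_le[OF degree_F, of h] by simp
qed

lemma coeff_D_F: "h \<ge> 1 \<Longrightarrow> coeff (D (F h)) (3 * h - 2) = of_rat (top_DF h) * C ^ (2 * h - 1)"
proof (cases "h = 1")
  case True
  then show ?thesis
    using coeff_eq_if_degree_diff_less[OF D_F1] by (simp add: top_DF_def of_rat_divide)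
next
  case False
  moreover assume "h \<ge> 1"
  ultimately have h: "h \<ge> 2"
    by simp
  have "coeff (D (F h)) (3 * h - 3 + 1)
      = of_rat (a h) * (of_nat (3 * (2 * h - 2)) - of_nat (3 * h - 3)) * C ^ (2 * h - 2 + 1)"
    using h by (intro coeff_D_weighted_top degree_F coeff_F) simp_all
  moreover have "3 * h - 3 + 1 = 3 * h - 2" "2 * h - 2 + 1 = 2 * h - 1"
    using h by simp_all
  moreover have "of_nat (3 * (2 * h - 2)) - of_nat (3 * h - 3) = (of_nat (3 * h - 3) :: 'a)"
  proof -
    have "3 * (2 * h - 2) = (3 * h - 3) + (3 * h - 3)"
      using h by simp
    then show ?thesis
      by simp
  qed
  ultimately have "coeff (D (F h)) (3 * h - 2) = of_rat (a h) * of_nat (3 * h - 3) * C ^ (2 * h - 1)"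
    by (simp only:)
  then show ?thesis
    using False by (simp add: top_DF_def of_rat_mult mult_ac)
qed

lemma coeff_pderiv_F:
  assumes "g \<ge> 2"
  shows "coeff (pderiv (F g)) (3 * g - 4) = of_nat (3 * g - 3) * of_rat (a g) * C ^ (2 * g - 2)"
proof -
  have "Suc (3 * g - 4) = 3 * g - 3"
    using assms by simp
  then show ?thesis
    by (simp only: coeff_pderiv coeff_F[OF assms] mult.assoc)
qed

lemma coeff_D_F_mult:
  assumes "1 \<le> h" "h < g"
  shows "coeff (D (F h) * D (F (g - h))) (3 * g - 4)
    = of_rat (top_DF h) * of_rat (top_DF (g - h)) * C ^ (2 * g - 2)"
proof -
  have "3 * g - 4 = (3 * h - 2) + (3 * (g - h) - 2)"
    using assms by simp
  then have "coeff (D (F h) * D (F (g - h))) (3 * g - 4)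
      = coeff (D (F h)) (3 * h - 2) * coeff (D (F (g - h))) (3 * (g - h) - 2)"
    using assms by (simp only:) (intro coeff_mult_at_degree_bounds degree_D_F; simp)
  also have "\<dots> = of_rat (top_DF h) * C ^ (2 * h - 1) * (of_rat (top_DF (g - h)) * C ^ (2 * (g - h) - 1))"
    using assms by (simp add: coeff_D_F)
  also have "\<dots> = of_rat (top_DF h) * of_rat (top_DF (g - h)) * C ^ ((2 * h - 1) + (2 * (g - h) - 1))"
    by (simp only: power_add mult_ac)
  also have "(2 * h - 1) + (2 * (g - h) - 1) = 2 * g - 2"
    using assms by simp
  finally show ?thesis .
qed

lemma coeff_DD_F:
  assumes "g \<ge> 2"
  shows "coeff (D (D (F (g - 1)))) (3 * g - 4) = of_nat (3 * g - 4) * of_rat (top_DF (g - 1)) * C ^ (2 * g - 2)"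
proof -
  have "coeff (D (D (F (g - 1)))) (3 * (g - 1) - 2 + 1)
      = of_rat (top_DF (g - 1)) * (of_nat (3 * (2 * (g - 1) - 1)) - of_nat (3 * (g - 1) - 2))
        * C ^ (2 * (g - 1) - 1 + 1)"
    using assms by (intro coeff_D_weighted_top degree_D_F coeff_D_F) simp_all
  moreover have "3 * (g - 1) - 2 + 1 = 3 * g - 4" "2 * (g - 1) - 1 + 1 = 2 * g - 2"
    using assms by simp_all
  moreover have "of_nat (3 * (2 * (g - 1) - 1)) - of_nat (3 * (g - 1) - 2) = (of_nat (3 * g - 4) :: 'a)"
  proof -
    have "3 * (2 * (g - 1) - 1) = (3 * (g - 1) - 2) + (3 * g - 4)"
      using assms by simp
    then show ?thesis
      by simp
  qed
  ultimately show ?thesis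
    by (simp only: mult_ac)
qed

lemma top_DF_recursion:
  assumes "g \<ge> 2"
  shows "of_nat (3 * g - 3) * a g
    = 1 / 2 * ((\<Sum>h = 1..g - 1. top_DF h * top_DF (g - h)) + of_nat (3 * g - 4) * top_DF (g - 1))"
    (is "?lhs = ?rhs")
proof -
  have "coeff (pderiv (F g)) (3 * g - 4)
      = 1 / 2 * coeff (\<Sum>h = 1..g - 1. D (F h) * D (F (g - h))) (3 * g - 4)
        + 1 / 2 * coeff (D (D (F (g - 1)))) (3 * g - 4)"
    unfolding HAE[OF assms] coeff_add coeff_smult ..
  moreover have "coeff (\<Sum>h = 1..g - 1. D (F h) * D (F (g - h))) (3 * g - 4)
      = (\<Sum>h = 1..g - 1. of_rat (top_DF h) * of_rat (top_DF (g - h)) * C ^ (2 * g - 2))"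
    unfolding coeff_sum by (intro sum.cong refl coeff_D_F_mult) auto
  ultimately have "of_nat (3 * g - 3) * of_rat (a g) * C ^ (2 * g - 2)
      = 1 / 2 * (\<Sum>h = 1..g - 1. of_rat (top_DF h) * of_rat (top_DF (g - h)) * C ^ (2 * g - 2))
        + 1 / 2 * (of_nat (3 * g - 4) * of_rat (top_DF (g - 1)) * C ^ (2 * g - 2))"
    by (simp only: coeff_pderiv_F[OF assms] coeff_DD_F[OF assms])
  then have "of_rat ?lhs * C ^ (2 * g - 2) = of_rat ?rhs * C ^ (2 * g - 2)"
    unfolding of_rat_mult of_rat_add of_rat_sum of_rat_of_nat_eq of_rat_divide
    by (simp add: sum_distrib_left sum_distrib_right algebra_simps)
  then show ?thesis
    using C_nz by simp
qed

lemma a_2: "a 2 = 5 / 24"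
  using top_DF_recursion[of 2] by (simp add: top_DF_def)

lemma a_recursion:
  assumes "g \<ge> 3"
  shows "of_nat (3 * g - 3) * a g =
    1 / 2 * ((\<Sum>h = 2..g - 2. of_nat (3 * h - 3) * of_nat (3 * g - 3 * h - 3) * a h * a (g - h))
             + of_nat (3 * g - 6) * of_nat (3 * g - 3) * a (g - 1))"
    (is "_ = 1 / 2 * (?S + _)")
proof -
  have top_DF_one: "top_DF 1 = 1 / 2"
    by (simp add: top_DF_def)
  have top_DF_pred: "top_DF (g - 1) = of_nat (3 * g - 6) * a (g - 1)"
    using assms by (simp add: top_DF_def)
  have "(\<Sum>h = 1..g - 1. top_DF h * top_DF (g - h))
      = top_DF 1 * top_DF (g - 1) + (\<Sum>h = 2..g - 2. top_DF h * top_DF (g - h)) + top_DF (g - 1) * top_DF 1"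
  proof -
    have "g - 1 = Suc (g - 2)" "2 \<le> Suc (g - 2)" "g - (g - 1) = 1"
      using assms by auto
    then show ?thesis
      using assms by (simp add: sum.atLeast_Suc_atMost sum.cl_ivl_Suc numeral_2_eq_2)
  qed
  also have "(\<Sum>h = 2..g - 2. top_DF h * top_DF (g - h)) = ?S"
  proof (rule sum.cong)
    fix h
    assume "h \<in> {2..g - 2}"
    then have "h \<noteq> 1" "g - h \<noteq> 1" "3 * (g - h) - 3 = 3 * g - 3 * h - 3"
      by auto
    then show "top_DF h * top_DF (g - h) = of_nat (3 * h - 3) * of_nat (3 * g - 3 * h - 3) * a h * a (g - h)"
      by (simp add: top_DF_def)
  qed simp
  finally have "(\<Sum>h = 1..g - 1. top_DF h * top_DF (g - h)) = ?S + of_nat (3 * g - 6) * a (g - 1)"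
    by (simp only: top_DF_pred top_DF_one)
  moreover have "(of_nat (3 * g - 4) :: rat) = of_nat (3 * g - 6) + 2"
    "(of_nat (3 * g - 3) :: rat) = of_nat (3 * g - 6) + 3"
    using assms by (simp_all add: of_nat_diff)
  ultimately show ?thesis
    using top_DF_recursion[of g] assms unfolding top_DF_pred by (simp add: algebra_simps)
qed

end

theorem mainTheorem1:
  fixes D :: "'a::field_char_0 poly \<Rightarrow> 'a poly"
    and C :: 'a
    and F :: "nat \<Rightarrow> 'a poly"
    and a :: "nat \<Rightarrow> rat"
  assumes D_add: "\<And>p q. D (p + q) = D p + D q"
    and D_leibniz: "\<And>p q. D (p * q) = D p * q + p * D q"
    and D_coeff: "\<And>c. degree (D [:c:]) \<le> 1"
    and C_nz: "C \<noteq> 0"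
    and D_S: "degree (D [:0, 1:] - [:0, 0, - C:]) < 2"
    and D_C: "degree (D [:C:] - [:0, 3 * C ^ 2:]) < 1"
    and D_F1: "degree (D (F 1) - [:0, C / 2:]) < 1"
    and F_top: "\<And>g. g \<ge> 2 \<Longrightarrow>
        degree (F g - monom (of_rat (a g) * C ^ (2 * g - 2)) (3 * g - 3)) < 3 * g - 3"
    and HAE: "\<And>g. g \<ge> 2 \<Longrightarrow>
        pderiv (F g) = smult (1 / 2) (\<Sum>h = 1..g - 1. D (F h) * D (F (g - h)))
                       + smult (1 / 2) (D (D (F (g - 1))))"
  shows "a 2 = 5 / 24 \<and>
    (\<forall>g\<ge>3. of_nat (3 * g - 3) * a g =
       1 / 2 * ((\<Sum>h = 2..g - 2. of_nat (3 * h - 3) * of_nat (3 * g - 3 * h - 3) * a h * a (g - h))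
                + of_nat (3 * g - 6) * of_nat (3 * g - 3) * a (g - 1)))"
proof -
  interpret polynomial_anomaly D C F a
    by unfold_locales (fact assms)+
  show ?thesis
    using a_2 a_recursion by blast
qed

end
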